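(* Let $(A,\diamond,\circ,\lambda)$ be a left semi-truss such that $(A,\diamond)$ is an inverse semigroup, let $\sigma(a,b)=a\circ(b\diamond b^\diamond)$, and assume that $\lambda(a,b)=\sigma(a,b)^\diamond\diamond(a\circ b)$ for all $a,b\in A$. Then for all $a,b,c\in A$ and every idempotent $e\in E(A,\diamond)$: (1) $\sigma(a,e\diamond b)=\sigma(a,e)\diamond\sigma(a,b)^\diamond\diamond\sigma(a,b)$; (2) $\sigma(a,e\diamond b)=\sigma(a,b)\diamond\sigma(a,e)^\diamond\diamond\sigma(a,e)$; (3) $\sigma(a,b)\diamond\sigma(a,c)^\diamond$ and $\sigma(a,c)\diamond\sigma(a,b)^\diamond$ are idempotents of $(A,\diamond)$ and are equal to each other; (4) $\sigma(a,b)\sim_l\sigma(a,c)$; (5) $\sigma(a,b^\diamond)\diamond(a\circ b)^\diamond=(a\circ b^\diamond)\diamond\sigma(a,b)^\diamond$; (6) $(a\circ b)^\diamond\diamond\sigma(a,b)=\sigma(a,b^\diamond)^\diamond\diamond(a\circ b^\diamond)$; (7) $\lambda(a,b^\diamond)=\lambda(a,b)^\diamond$; (8) $\lambda(a,e\diamond b)=\lambda(a,e)\diamond\lambda(a,b)$.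
   Context: An inverse semigroup is a semigroup $(A,\diamond)$ in which every $a$ has a unique $a^\diamond$ with $a\diamond a^\diamond\diamond a=a$ and $a^\diamond\diamond a\diamond a^\diamond=a^\diamond$. $E(A,\diamond)$ denotes the set of idempotents of $(A,\diamond)$. Two elements $x,y$ of an inverse semigroup satisfy the left compatibility relation $x\sim_l y$ if $x\diamond y^\diamond$ is an idempotent. A left semi-truss $(A,\diamond,\circ,\lambda)$ is a set $A$ with two associative binary operations $\diamond,\circ$ and a function $\lambda:A\times A\to A$ such that $a\circ(b\diamond c)=(a\circ b)\diamond\lambda(a,c)$ for all $a,b,c\in A$. *)

theory Defs
  imports Main
begin

definition is_semigroup :: "('a \<Rightarrow> 'a \<Rightarrow> 'a) \<Rightarrow> bool" where
  "is_semigroup d \<longleftrightarrow> (\<forall>a b c. d (d a b) c = d a (d b c))"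

definition inverse_semigroup :: "('a \<Rightarrow> 'a \<Rightarrow> 'a) \<Rightarrow> bool" where
  "inverse_semigroup d \<longleftrightarrow> is_semigroup d \<and>
     (\<forall>a. \<exists>!x. d (d a x) a = a \<and> d (d x a) x = x)"

definition sg_inv :: "('a \<Rightarrow> 'a \<Rightarrow> 'a) \<Rightarrow> 'a \<Rightarrow> 'a" where
  "sg_inv d a = (THE x. d (d a x) a = a \<and> d (d x a) x = x)"

definition idempotents :: "('a \<Rightarrow> 'a \<Rightarrow> 'a) \<Rightarrow> 'a set" where
  "idempotents d = {e. d e e = e}"

definition left_compatible :: "('a \<Rightarrow> 'a \<Rightarrow> 'a) \<Rightarrow> 'a \<Rightarrow> 'a \<Rightarrow> bool" where
  "left_compatible d x y \<longleftrightarrow> d x (sg_inv d y) \<in> idempotents d"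

definition left_semi_truss ::
  "('a \<Rightarrow> 'a \<Rightarrow> 'a) \<Rightarrow> ('a \<Rightarrow> 'a \<Rightarrow> 'a) \<Rightarrow> ('a \<Rightarrow> 'a \<Rightarrow> 'a) \<Rightarrow> bool" where
  "left_semi_truss d c lam \<longleftrightarrow> is_semigroup d \<and> is_semigroup c \<and>
     (\<forall>a b x. c a (d b x) = d (c a b) (lam a x))"

end

theory Submission
  imports Defs
begin

text \<open>
  The assumed form of \<open>\<lambda>\<close> turns the truss law into
  \<open>a \<circ> (x \<diamond> y) = (a \<circ> x) \<diamond> \<sigma>(a,y)\<^sup>\<diamond> \<diamond> (a \<circ> y)\<close>, and \<open>\<sigma>(a,e) = a \<circ> e\<close> for idempotent \<open>e\<close>.
  Since idempotents commute, evaluating \<open>a \<circ> (b \<diamond> b\<^sup>\<diamond> \<diamond> c \<diamond> c\<^sup>\<diamond>)\<close> in both orders shows that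
  \<open>\<sigma>(a,b) \<diamond> \<sigma>(a,c)\<^sup>\<diamond> \<diamond> \<sigma>(a,c)\<close> is symmetric in \<open>b, c\<close>; in an inverse semigroup
  \<open>p \<diamond> q\<^sup>\<diamond> \<diamond> q = q \<diamond> p\<^sup>\<diamond> \<diamond> p\<close> forces \<open>p \<diamond> q\<^sup>\<diamond> = q \<diamond> p\<^sup>\<diamond>\<close> to be idempotent.
  Expanding \<open>\<sigma>(a,b) = a \<circ> (b \<diamond> b\<^sup>\<diamond>)\<close> and \<open>\<sigma>(a,b\<^sup>\<diamond>) = a \<circ> (b\<^sup>\<diamond> \<diamond> b)\<close> with the truss law
  and taking inverses gives the identities relating \<open>a \<circ> b\<close> and \<open>a \<circ> b\<^sup>\<diamond>\<close>.
\<close>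

locale inv_semigroup =
  fixes d :: "'a \<Rightarrow> 'a \<Rightarrow> 'a" (infixr "\<diamond>" 70)
  assumes inverse_semigroup: "inverse_semigroup d"
begin

abbreviation sginv :: "'a \<Rightarrow> 'a" ("_\<^sup>\<diamond>" [1000] 999) where
  "x\<^sup>\<diamond> \<equiv> sg_inv d x"

lemma assoc [simp]: "(x \<diamond> y) \<diamond> z = x \<diamond> y \<diamond> z"
  using inverse_semigroup unfolding inverse_semigroup_def is_semigroup_def by blast

lemma ex1_inverse: "\<exists>!y. x \<diamond> y \<diamond> x = x \<and> y \<diamond> x \<diamond> y = y"
  using inverse_semigroup unfolding inverse_semigroup_def by simp

lemma sg_inv_inverse: "x \<diamond> x\<^sup>\<diamond> \<diamond> x = x \<and> x\<^sup>\<diamond> \<diamond> x \<diamond> x\<^sup>\<diamond> = x\<^sup>\<diamond>"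
proof -
  have "(x \<diamond> x\<^sup>\<diamond>) \<diamond> x = x \<and> (x\<^sup>\<diamond> \<diamond> x) \<diamond> x\<^sup>\<diamond> = x\<^sup>\<diamond>"
    unfolding sg_inv_def by (rule theI') (use inverse_semigroup in \<open>simp add: inverse_semigroup_def\<close>)
  then show ?thesis by simp
qed

lemma mult_sg_inv_mult [simp]: "x \<diamond> x\<^sup>\<diamond> \<diamond> x = x"
  and sg_inv_mult_sg_inv [simp]: "x\<^sup>\<diamond> \<diamond> x \<diamond> x\<^sup>\<diamond> = x\<^sup>\<diamond>"
  using sg_inv_inverse by simp_all

lemma mult_sg_inv_mult_left [simp]: "x \<diamond> x\<^sup>\<diamond> \<diamond> x \<diamond> z = x \<diamond> z"
  and sg_inv_mult_sg_inv_left [simp]: "x\<^sup>\<diamond> \<diamond> x \<diamond> x\<^sup>\<diamond> \<diamond> z = x\<^sup>\<diamond> \<diamond> z"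
  by (metis assoc mult_sg_inv_mult, metis assoc sg_inv_mult_sg_inv)

lemma sg_inv_unique:
  assumes "x \<diamond> y \<diamond> x = x" and "y \<diamond> x \<diamond> y = y"
  shows "y = x\<^sup>\<diamond>"
  using ex1_inverse[of x] sg_inv_inverse[of x] assms by blast

lemma sg_inv_sg_inv [simp]: "(x\<^sup>\<diamond>)\<^sup>\<diamond> = x"
  by (rule sg_inv_unique[symmetric]) simp_all

lemma sg_inv_idempotent: "e \<diamond> e = e \<Longrightarrow> e\<^sup>\<diamond> = e"
  by (rule sg_inv_unique[symmetric]) (metis assoc)+

lemma idempotent_mult_left: "e \<diamond> e = e \<Longrightarrow> e \<diamond> e \<diamond> z = e \<diamond> z"
  by (metis assoc)

lemma idempotent_mult_sg_inv [simp]: "(x \<diamond> x\<^sup>\<diamond>) \<diamond> (x \<diamond> x\<^sup>\<diamond>) = x \<diamond> x\<^sup>\<diamond>"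
  and idempotent_sg_inv_mult [simp]: "(x\<^sup>\<diamond> \<diamond> x) \<diamond> (x\<^sup>\<diamond> \<diamond> x) = x\<^sup>\<diamond> \<diamond> x"
  by simp_all

lemma idempotent_mult:
  assumes e: "e \<diamond> e = e" and f: "f \<diamond> f = f"
  shows "(e \<diamond> f) \<diamond> (e \<diamond> f) = e \<diamond> f"
proof -
  define x where "x = (e \<diamond> f)\<^sup>\<diamond>"
  have x1: "e \<diamond> f \<diamond> x \<diamond> e \<diamond> f = e \<diamond> f"
    using mult_sg_inv_mult[of "e \<diamond> f"] unfolding x_def by (simp only: assoc)
  have x2: "x \<diamond> e \<diamond> f \<diamond> x = x"
    using sg_inv_mult_sg_inv[of "e \<diamond> f"] unfolding x_def by (simp only: assoc)
  have "x \<diamond> e \<diamond> f \<diamond> x \<diamond> z = x \<diamond> z" for z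
    by (metis assoc x2)
  then have "f \<diamond> x \<diamond> e = (e \<diamond> f)\<^sup>\<diamond>"
    by (intro sg_inv_unique) (simp_all add: x1 idempotent_mult_left[OF e] idempotent_mult_left[OF f])
  then have fxe: "f \<diamond> x \<diamond> e = x"
    by (simp add: x_def)
  have idem: "x \<diamond> x = x"
  proof -
    have "x \<diamond> x = (f \<diamond> x \<diamond> e) \<diamond> (f \<diamond> x \<diamond> e)"
      by (simp only: fxe)
    also have "\<dots> = f \<diamond> (x \<diamond> e \<diamond> f \<diamond> x) \<diamond> e"
      by simp
    also have "\<dots> = x"
      by (simp only: x2 fxe)
    finally show ?thesis .
  qed
  have "e \<diamond> f = x"
    using sg_inv_idempotent[OF idem] by (simp add: x_def)
  with idem show ?thesis by simp
qed

lemma idempotents_commute: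
  assumes e: "e \<diamond> e = e" and f: "f \<diamond> f = f"
  shows "e \<diamond> f = f \<diamond> e"
proof -
  have ef: "(e \<diamond> f) \<diamond> (e \<diamond> f) = e \<diamond> f" and fe: "(f \<diamond> e) \<diamond> (f \<diamond> e) = f \<diamond> e"
    using idempotent_mult e f by auto
  have "f \<diamond> e = (e \<diamond> f)\<^sup>\<diamond>"
    by (rule sg_inv_unique)
      (use ef fe in \<open>simp_all add: idempotent_mult_left[OF e] idempotent_mult_left[OF f]\<close>)
  then show ?thesis
    using sg_inv_idempotent[OF ef] by simp
qed

lemma idempotents_commute_left:
  "e \<diamond> e = e \<Longrightarrow> f \<diamond> f = f \<Longrightarrow> e \<diamond> f \<diamond> z = f \<diamond> e \<diamond> z"
  by (metis assoc idempotents_commute)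

lemma sg_inv_mult: "(x \<diamond> y)\<^sup>\<diamond> = y\<^sup>\<diamond> \<diamond> x\<^sup>\<diamond>"
proof (rule sg_inv_unique[symmetric])
  show "(x \<diamond> y) \<diamond> (y\<^sup>\<diamond> \<diamond> x\<^sup>\<diamond>) \<diamond> (x \<diamond> y) = x \<diamond> y"
    using idempotents_commute_left[OF idempotent_mult_sg_inv[of y] idempotent_sg_inv_mult[of x], of y]
    by simp
  show "(y\<^sup>\<diamond> \<diamond> x\<^sup>\<diamond>) \<diamond> (x \<diamond> y) \<diamond> (y\<^sup>\<diamond> \<diamond> x\<^sup>\<diamond>) = y\<^sup>\<diamond> \<diamond> x\<^sup>\<diamond>"
    using idempotents_commute_left[OF idempotent_sg_inv_mult[of x] idempotent_mult_sg_inv[of y], of "x\<^sup>\<diamond>"]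
    by simp
qed

lemma sg_inv_absorb_left: "x \<diamond> x\<^sup>\<diamond> \<diamond> y = y \<Longrightarrow> y\<^sup>\<diamond> \<diamond> x \<diamond> x\<^sup>\<diamond> = y\<^sup>\<diamond>"
  by (metis sg_inv_mult sg_inv_sg_inv assoc)

lemma sg_inv_absorb_right: "y \<diamond> x\<^sup>\<diamond> \<diamond> x = y \<Longrightarrow> x\<^sup>\<diamond> \<diamond> x \<diamond> y\<^sup>\<diamond> = y\<^sup>\<diamond>"
  by (metis sg_inv_mult sg_inv_sg_inv assoc)

lemma idempotent_conj:
  assumes "e \<diamond> e = e"
  shows "(x \<diamond> e \<diamond> x\<^sup>\<diamond>) \<diamond> (x \<diamond> e \<diamond> x\<^sup>\<diamond>) = x \<diamond> e \<diamond> x\<^sup>\<diamond>"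
proof -
  have "(x \<diamond> e \<diamond> x\<^sup>\<diamond>) \<diamond> (x \<diamond> e \<diamond> x\<^sup>\<diamond>) = x \<diamond> (e \<diamond> (x\<^sup>\<diamond> \<diamond> x)) \<diamond> e \<diamond> x\<^sup>\<diamond>"
    by simp
  also have "\<dots> = x \<diamond> ((x\<^sup>\<diamond> \<diamond> x) \<diamond> e) \<diamond> e \<diamond> x\<^sup>\<diamond>"
    by (simp only: idempotents_commute[OF assms idempotent_sg_inv_mult])
  finally show ?thesis
    by (simp add: idempotent_mult_left[OF assms])
qed

lemma
  assumes "p \<diamond> q\<^sup>\<diamond> \<diamond> q = q \<diamond> p\<^sup>\<diamond> \<diamond> p"
  shows mult_sg_inv_idempotentI: "(p \<diamond> q\<^sup>\<diamond>) \<diamond> (p \<diamond> q\<^sup>\<diamond>) = p \<diamond> q\<^sup>\<diamond>"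
    and mult_sg_inv_commuteI: "p \<diamond> q\<^sup>\<diamond> = q \<diamond> p\<^sup>\<diamond>"
proof -
  have "p \<diamond> q\<^sup>\<diamond> = (p \<diamond> q\<^sup>\<diamond> \<diamond> q) \<diamond> q\<^sup>\<diamond>"
    by simp
  then have pq: "p \<diamond> q\<^sup>\<diamond> = q \<diamond> (p\<^sup>\<diamond> \<diamond> p) \<diamond> q\<^sup>\<diamond>"
    by (simp add: assms)
  show idem: "(p \<diamond> q\<^sup>\<diamond>) \<diamond> (p \<diamond> q\<^sup>\<diamond>) = p \<diamond> q\<^sup>\<diamond>"
    unfolding pq by (rule idempotent_conj[OF idempotent_sg_inv_mult])
  show "p \<diamond> q\<^sup>\<diamond> = q \<diamond> p\<^sup>\<diamond>"
    using sg_inv_idempotent[OF idem] by (simp add: sg_inv_mult)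
qed

end

locale semi_truss_sigma = inv_semigroup d
  for d :: "'a \<Rightarrow> 'a \<Rightarrow> 'a" (infixr "\<diamond>" 70) +
  fixes circ lam \<sigma> :: "'a \<Rightarrow> 'a \<Rightarrow> 'a"
  assumes truss: "left_semi_truss d circ lam"
    and sigma_def: "\<sigma> a b = circ a (b \<diamond> b\<^sup>\<diamond>)"
    and lam_eq: "lam a b = (\<sigma> a b)\<^sup>\<diamond> \<diamond> circ a b"
begin

lemma circ_mult: "circ a (x \<diamond> y) = circ a x \<diamond> (\<sigma> a y)\<^sup>\<diamond> \<diamond> circ a y"
  using truss lam_eq unfolding left_semi_truss_def by simp

lemma sigma_idempotent: "e \<diamond> e = e \<Longrightarrow> \<sigma> a e = circ a e"
  by (simp add: sigma_def sg_inv_idempotent)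

lemma sigma_mult_sg_inv: "\<sigma> a (x \<diamond> x\<^sup>\<diamond>) = \<sigma> a x"
  by (simp only: sigma_idempotent[OF idempotent_mult_sg_inv] sigma_def[of a x])

lemma circ_idempotent_mult:
  assumes "e \<diamond> e = e" and "f \<diamond> f = f"
  shows "circ a (e \<diamond> f) = \<sigma> a e \<diamond> (\<sigma> a f)\<^sup>\<diamond> \<diamond> \<sigma> a f"
  using circ_mult[of a e f] by (simp add: sigma_idempotent assms)

lemma range_idempotent_mult:
  assumes "e \<diamond> e = e"
  shows "(e \<diamond> b) \<diamond> (e \<diamond> b)\<^sup>\<diamond> = e \<diamond> (b \<diamond> b\<^sup>\<diamond>)"
proof -
  have "(e \<diamond> b) \<diamond> (e \<diamond> b)\<^sup>\<diamond> = e \<diamond> ((b \<diamond> b\<^sup>\<diamond>) \<diamond> e)"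
    by (simp add: sg_inv_mult sg_inv_idempotent assms)
  also have "\<dots> = e \<diamond> e \<diamond> (b \<diamond> b\<^sup>\<diamond>)"
    by (simp only: idempotents_commute[OF idempotent_mult_sg_inv assms])
  finally show ?thesis
    by (simp add: idempotent_mult_left[OF assms])
qed

lemma sigma_idempotent_mult:
  assumes "e \<diamond> e = e"
  shows "\<sigma> a (e \<diamond> b) = \<sigma> a e \<diamond> (\<sigma> a b)\<^sup>\<diamond> \<diamond> \<sigma> a b"
proof -
  have "\<sigma> a (e \<diamond> b) = circ a (e \<diamond> (b \<diamond> b\<^sup>\<diamond>))"
    by (simp only: sigma_def[of a "e \<diamond> b"] range_idempotent_mult[OF assms])
  then show ?thesis
    by (simp only: circ_idempotent_mult[OF assms idempotent_mult_sg_inv] sigma_mult_sg_inv)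
qed

lemma sigma_mult_sg_inv_sigma_sym:
  "\<sigma> a b \<diamond> (\<sigma> a c)\<^sup>\<diamond> \<diamond> \<sigma> a c = \<sigma> a c \<diamond> (\<sigma> a b)\<^sup>\<diamond> \<diamond> \<sigma> a b"
  using circ_idempotent_mult[of "b \<diamond> b\<^sup>\<diamond>" "c \<diamond> c\<^sup>\<diamond>" a] circ_idempotent_mult[of "c \<diamond> c\<^sup>\<diamond>" "b \<diamond> b\<^sup>\<diamond>" a]
    idempotents_commute[OF idempotent_mult_sg_inv[of b] idempotent_mult_sg_inv[of c]]
  by (simp add: sigma_mult_sg_inv)

lemma sigma_eq_circ: "\<sigma> a x = circ a x \<diamond> (\<sigma> a (x\<^sup>\<diamond>))\<^sup>\<diamond> \<diamond> circ a (x\<^sup>\<diamond>)"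
  unfolding sigma_def[of a x] by (rule circ_mult)

lemma sigma_sg_inv_eq_circ: "\<sigma> a (x\<^sup>\<diamond>) = circ a (x\<^sup>\<diamond>) \<diamond> (\<sigma> a x)\<^sup>\<diamond> \<diamond> circ a x"
  using sigma_eq_circ[of a "x\<^sup>\<diamond>"] by simp

lemma sigma_sg_inv_mult_circ_sg_inv:
  "\<sigma> a (b\<^sup>\<diamond>) \<diamond> (circ a b)\<^sup>\<diamond> = circ a (b\<^sup>\<diamond>) \<diamond> (\<sigma> a b)\<^sup>\<diamond>"
proof -
  have "circ a b \<diamond> (circ a b)\<^sup>\<diamond> \<diamond> \<sigma> a b = \<sigma> a b"
    by (subst (1 2) sigma_eq_circ) simp
  then have "(\<sigma> a b)\<^sup>\<diamond> \<diamond> circ a b \<diamond> (circ a b)\<^sup>\<diamond> = (\<sigma> a b)\<^sup>\<diamond>"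
    by (rule sg_inv_absorb_left)
  then show ?thesis
    by (subst sigma_sg_inv_eq_circ) (metis assoc)
qed

lemma circ_sg_inv_mult_sigma:
  "(circ a b)\<^sup>\<diamond> \<diamond> \<sigma> a b = (\<sigma> a (b\<^sup>\<diamond>))\<^sup>\<diamond> \<diamond> circ a (b\<^sup>\<diamond>)"
proof -
  have "\<sigma> a (b\<^sup>\<diamond>) \<diamond> (circ a b)\<^sup>\<diamond> \<diamond> circ a b = \<sigma> a (b\<^sup>\<diamond>)"
    by (subst (1 2) sigma_sg_inv_eq_circ) simp
  then have "(circ a b)\<^sup>\<diamond> \<diamond> circ a b \<diamond> (\<sigma> a (b\<^sup>\<diamond>))\<^sup>\<diamond> = (\<sigma> a (b\<^sup>\<diamond>))\<^sup>\<diamond>"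
    by (rule sg_inv_absorb_right)
  then show ?thesis
    by (subst sigma_eq_circ) (metis assoc)
qed

lemma lam_sg_inv: "lam a (b\<^sup>\<diamond>) = (lam a b)\<^sup>\<diamond>"
  using circ_sg_inv_mult_sigma[of a b] by (simp add: lam_eq sg_inv_mult)

lemma lam_idempotent_mult:
  assumes e: "e \<diamond> e = e"
  shows "lam a (e \<diamond> b) = lam a e \<diamond> lam a b"
proof -
  let ?g = "\<sigma> a e" and ?s = "\<sigma> a b"
  have "lam a (e \<diamond> b) = (?s\<^sup>\<diamond> \<diamond> ?s) \<diamond> (?g\<^sup>\<diamond> \<diamond> ?g) \<diamond> ?s\<^sup>\<diamond> \<diamond> circ a b"
    by (simp add: lam_eq sigma_idempotent_mult[OF e] circ_mult sigma_idempotent[OF e] sg_inv_mult)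
  also have "\<dots> = (?g\<^sup>\<diamond> \<diamond> ?g) \<diamond> ?s\<^sup>\<diamond> \<diamond> circ a b"
    by (simp only: idempotents_commute_left[OF idempotent_sg_inv_mult[of "\<sigma> a b"]
          idempotent_sg_inv_mult[of "\<sigma> a e"]]) simp
  also have "\<dots> = lam a e \<diamond> lam a b"
    by (simp add: lam_eq sigma_idempotent[OF e])
  finally show ?thesis .
qed

end

theorem proposition3p4:
  fixes d circ lam :: "'a \<Rightarrow> 'a \<Rightarrow> 'a" and \<sigma> :: "'a \<Rightarrow> 'a \<Rightarrow> 'a"
  assumes truss: "left_semi_truss d circ lam"
    and inv: "inverse_semigroup d"
    and sigma_def: "\<And>a b. \<sigma> a b = circ a (d b (sg_inv d b))"
    and lam_eq: "\<And>a b. lam a b = d (sg_inv d (\<sigma> a b)) (circ a b)"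
  shows "\<forall>a b c. \<forall>e \<in> idempotents d.
     \<sigma> a (d e b) = d (d (\<sigma> a e) (sg_inv d (\<sigma> a b))) (\<sigma> a b)
   \<and> \<sigma> a (d e b) = d (d (\<sigma> a b) (sg_inv d (\<sigma> a e))) (\<sigma> a e)
   \<and> d (\<sigma> a b) (sg_inv d (\<sigma> a c)) \<in> idempotents d
   \<and> d (\<sigma> a c) (sg_inv d (\<sigma> a b)) \<in> idempotents d
   \<and> d (\<sigma> a b) (sg_inv d (\<sigma> a c)) = d (\<sigma> a c) (sg_inv d (\<sigma> a b))
   \<and> left_compatible d (\<sigma> a b) (\<sigma> a c)
   \<and> d (\<sigma> a (sg_inv d b)) (sg_inv d (circ a b)) = d (circ a (sg_inv d b)) (sg_inv d (\<sigma> a b))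
   \<and> d (sg_inv d (circ a b)) (\<sigma> a b) = d (sg_inv d (\<sigma> a (sg_inv d b))) (circ a (sg_inv d b))
   \<and> lam a (sg_inv d b) = sg_inv d (lam a b)
   \<and> lam a (d e b) = d (lam a e) (lam a b)"
    (is "\<forall>a b c. \<forall>e \<in> idempotents d. ?claims a b c e")
proof (intro allI ballI)
  interpret semi_truss_sigma d circ lam \<sigma>
    using truss inv sigma_def lam_eq by unfold_locales auto
  fix a b c e
  assume "e \<in> idempotents d"
  then have e: "d e e = e"
    by (simp add: idempotents_def)
  note idem = mult_sg_inv_idempotentI[OF sigma_mult_sg_inv_sigma_sym]
  show "?claims a b c e"
    unfolding left_compatible_def idempotents_def mem_Collect_eq
    using sigma_idempotent_mult[OF e, of a b] sigma_mult_sg_inv_sigma_sym[of a e b]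
      idem[of a b c] idem[of a c b] mult_sg_inv_commuteI[OF sigma_mult_sg_inv_sigma_sym, of a b c]
      sigma_sg_inv_mult_circ_sg_inv[of a b] circ_sg_inv_mult_sigma[of a b]
      lam_sg_inv[of a b] lam_idempotent_mult[OF e, of a b]
    by simp
qed

end
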